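(* If for some $T_0>0$ the family $Z^\varepsilon(T_0)=\varepsilon Z(T_0/\varepsilon)$ satisfies the weak large deviation principle in $\mathbb R^d$ with rate function $I_{T_0}$, then for every $T>0$ the family $Z^\varepsilon(T)$ satisfies the weak large deviation principle in $\mathbb R^d$, and the rate functions satisfy \[I_{\theta T}(\theta q,\theta q')=\theta\,I_T(q,q')\quad\text{for all }\theta>0,\ T>0,\ q,q'\in\mathbb R^d,\] and \[I_{T+T'}(q,q'')\le I_T(q,q')+I_{T'}(q',q'')\quad\text{for all }T,T'>0,\ q,q',q''\in\mathbb R^d.\]
   Context: Let $E\subset\mathbb R^d$ be unbounded and $(Z(t))_{t\ge0}$ a continuous-time strong Markov process on $E$ with right-continuous paths having left limits; $\mathbb P_z$ denotes probability given $Z(0)=z$. For $\varepsilon>0$, $Z^\varepsilon(t)=\varepsilon Z(t/\varepsilon)$. Weak LDP: for $T>0$, the family $Z^\varepsilon(T)$ satisfies the weak large deviation principle with rate function $I_T:\mathbb R^d\times\mathbb R^d\to[0,\infty]$ if $I_T$ is lower semicontinuous; for every $q\in\mathbb R^d$ and open $O\subset\mathbb R^d$, $\lim_{\delta\to0}\liminf_{\varepsilon\to0}\varepsilon\log\inf_{z\in E:|\varepsilon z-q|<\delta}\mathbb P_z(Z^\varepsilon(T)\in O)\ge-\inf_{q'\in O}I_T(q,q')$; and for every $q\in\mathbb R^d$ and compact $V\subset\mathbb R^d$, $\lim_{\delta\to0}\limsup_{\varepsilon\to0}\varepsilon\log\sup_{z\in E:|\varepsilon z-q|<\delta}\mathbb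 P_z(Z^\varepsilon(T)\in V)\le-\inf_{q'\in V}I_T(q,q')$. *)

theory Defs
  imports "HOL-Probability.Probability"
begin

text \<open>Extended logarithm on [0,\<infinity>]: log 0 = -\<infinity> (and -\<infinity> for nonpositive arguments,
  which only arises from the empty supremum), log \<infinity> = \<infinity> (only from the empty infimum).\<close>
definition elog :: "ereal \<Rightarrow> ereal" where
  "elog x = (if x \<le> 0 then -\<infinity> else if x = \<infinity> then \<infinity> else ereal (ln (real_of_ereal x)))"

definition lower_semicont :: "('b::topological_space \<Rightarrow> ereal) \<Rightarrow> bool" where
  "lower_semicont f \<longleftrightarrow> (\<forall>x c. c < f x \<longrightarrow> eventually (\<lambda>y. c < f y) (nhds x))"

definition nat_filt :: "'w measure \<Rightarrow> (real \<Rightarrow> 'w \<Rightarrow> 'a::topological_space) \<Rightarrow> real \<Rightarrow> 'w set set" where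
  "nat_filt \<Omega> Z s = sigma_sets (space \<Omega>)
     (\<Union>r\<in>{0..s}. {Z r -` B \<inter> space \<Omega> | B. B \<in> sets borel})"

definition markov_process ::
  "'a::euclidean_space set \<Rightarrow> 'w measure \<Rightarrow> ('a \<Rightarrow> 'w measure) \<Rightarrow> (real \<Rightarrow> 'w \<Rightarrow> 'a) \<Rightarrow> bool" where
  "markov_process E \<Omega> P Z \<longleftrightarrow>
     (\<forall>z\<in>E. prob_space (P z) \<and> sets (P z) = sets \<Omega>) \<and>
     (\<forall>t\<ge>0. Z t \<in> measurable \<Omega> borel) \<and>
     (\<forall>\<omega>\<in>space \<Omega>. \<forall>t\<ge>0. Z t \<omega> \<in> E) \<and>
     (\<forall>z\<in>E. AE \<omega> in P z. Z 0 \<omega> = z) \<and>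
     (\<forall>\<omega>\<in>space \<Omega>. \<forall>t\<ge>0. continuous (at_right t) (\<lambda>s. Z s \<omega>) \<and>
        (t > 0 \<longrightarrow> (\<exists>l. ((\<lambda>s. Z s \<omega>) \<longlongrightarrow> l) (at_left t)))) \<and>
     (\<forall>t\<ge>0. \<forall>A\<in>sets borel.
        (\<lambda>z. measure (P z) {\<omega>\<in>space \<Omega>. Z t \<omega> \<in> A}) \<in> borel_measurable (restrict_space borel E)) \<and>
     (\<forall>z\<in>E. \<forall>s\<ge>0. \<forall>t\<ge>0. \<forall>A\<in>sets borel. \<forall>F\<in>nat_filt \<Omega> Z s.
        measure (P z) (F \<inter> {\<omega>\<in>space \<Omega>. Z (s + t) \<omega> \<in> A}) =
        (\<integral>\<omega>. indicator F \<omega> * measure (P (Z s \<omega>)) {\<omega>'\<in>space \<Omega>. Z t \<omega>' \<in> A} \<partial>P z))"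

definition scaled_prob ::
  "'w measure \<Rightarrow> ('a::euclidean_space \<Rightarrow> 'w measure) \<Rightarrow> (real \<Rightarrow> 'w \<Rightarrow> 'a) \<Rightarrow> real \<Rightarrow> real \<Rightarrow> 'a \<Rightarrow> 'a set \<Rightarrow> real" where
  "scaled_prob \<Omega> P Z T \<epsilon> z S = measure (P z) {\<omega>\<in>space \<Omega>. \<epsilon> *\<^sub>R Z (T / \<epsilon>) \<omega> \<in> S}"

text \<open>Weak large deviation principle for Z^eps(T) with rate function I (uniform in the starting
  point z with eps z near q). Infimum over the empty set is +\<infinity>, supremum over the empty set is -\<infinity>.\<close>
definition weak_LDP ::
  "'a::euclidean_space set \<Rightarrow> 'w measure \<Rightarrow> ('a \<Rightarrow> 'w measure) \<Rightarrow> (real \<Rightarrow> 'w \<Rightarrow> 'a) \<Rightarrow> real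
     \<Rightarrow> ('a \<Rightarrow> 'a \<Rightarrow> ereal) \<Rightarrow> bool" where
  "weak_LDP E \<Omega> P Z T I \<longleftrightarrow>
     (\<forall>q q'. 0 \<le> I q q') \<and>
     lower_semicont (\<lambda>(q, q'). I q q') \<and>
     (\<forall>q U. open U \<longrightarrow>
        (\<exists>L. ((\<lambda>\<delta>. Liminf (at_right 0) (\<lambda>\<epsilon>. ereal \<epsilon> *
              elog (INF z\<in>{z\<in>E. dist (\<epsilon> *\<^sub>R z) q < \<delta>}. ereal (scaled_prob \<Omega> P Z T \<epsilon> z U))))
             \<longlongrightarrow> L) (at_right 0) \<and>
           - (INF q'\<in>U. I q q') \<le> L)) \<and>
     (\<forall>q V. compact V \<longrightarrow>
        (\<exists>L. ((\<lambda>\<delta>. Limsup (at_right 0) (\<lambda>\<epsilon>. ereal \<epsilon> *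
              elog (SUP z\<in>{z\<in>E. dist (\<epsilon> *\<^sub>R z) q < \<delta>}. ereal (scaled_prob \<Omega> P Z T \<epsilon> z V))))
             \<longlongrightarrow> L) (at_right 0) \<and>
           L \<le> - (INF q'\<in>V. I q q')))"

end

theory Submission
  imports Defs
begin

(* Since Z^\<epsilon>(\<theta> T) = \<theta> Z^(\<epsilon>/\<theta>)(T), a weak LDP at time T\<^sub>0 transfers to every time T = \<theta> T\<^sub>0
  with rate function \<theta> I(q/\<theta>, q'/\<theta>), and the resulting family is scale covariant by construction.
  Subadditivity comes from the Markov property at the intermediate time: started near q, the process
  is in a small ball around q' at time T with probability roughly exp(-I\<^sub>T(q,q')/\<epsilon>), and from every
  point near q' it reaches a ball around q'' within a further time T' with probability roughly
  exp(-I\<^sub>T\<^sub>'(q',q'')/\<epsilon>), uniformly in the starting point. The upper bound at time T + T' and lower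
  semicontinuity of the rate function at time T + T' turn this into the inequality at q''.
  The argument needs starting points z with \<epsilon> z close to q for arbitrarily small \<epsilon>. At all other
  points q the LDP bounds are vacuous, so the rate function may be, and is, redefined to be \<infinity> there. *)

lemma filtermap_divide_at_right_0:
  assumes "\<theta> > 0"
  shows "filtermap (\<lambda>x. x / \<theta>) (at_right 0) = at_right (0::real)"
  using filtermap_times_pos_at_right[of "inverse \<theta>" 0] assms
  by (simp add: divide_inverse_commute)

lemma filterlim_divide_at_right_0:
  "\<theta> > 0 \<Longrightarrow> filterlim (\<lambda>x. x / \<theta>) (at_right 0) (at_right (0::real))"
  by (simp add: filterlim_def filtermap_divide_at_right_0)

lemma Liminf_at_right_0_rescale:
  fixes G :: "real \<Rightarrow> ereal"
  assumes "\<theta> > 0"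
  shows "Liminf (at_right 0) (\<lambda>\<epsilon>. ereal \<epsilon> * G (\<epsilon> / \<theta>))
    = ereal \<theta> * Liminf (at_right 0) (\<lambda>\<epsilon>. ereal \<epsilon> * G \<epsilon>)"
proof -
  have "ereal \<epsilon> * G (\<epsilon> / \<theta>) = ereal \<theta> * (ereal (\<epsilon> / \<theta>) * G (\<epsilon> / \<theta>))" for \<epsilon>
    using assms by (simp add: mult.assoc[symmetric])
  then have "Liminf (at_right 0) (\<lambda>\<epsilon>. ereal \<epsilon> * G (\<epsilon> / \<theta>))
      = ereal \<theta> * Liminf (at_right 0) (\<lambda>\<epsilon>. ereal (\<epsilon> / \<theta>) * G (\<epsilon> / \<theta>))"
    using assms by (simp add: Liminf_ereal_mult_left)
  also have "Liminf (at_right 0) (\<lambda>\<epsilon>. ereal (\<epsilon> / \<theta>) * G (\<epsilon> / \<theta>))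
      = Liminf (at_right 0) (\<lambda>\<epsilon>. ereal \<epsilon> * G \<epsilon>)"
    using Liminf_filtermap_eq[of "\<lambda>x. x / \<theta>" "at_right 0" "\<lambda>\<epsilon>. ereal \<epsilon> * G \<epsilon>"] assms
    by (simp add: inj_def filtermap_divide_at_right_0)
  finally show ?thesis .
qed

lemma Limsup_at_right_0_rescale:
  fixes G :: "real \<Rightarrow> ereal"
  assumes "\<theta> > 0"
  shows "Limsup (at_right 0) (\<lambda>\<epsilon>. ereal \<epsilon> * G (\<epsilon> / \<theta>))
    = ereal \<theta> * Limsup (at_right 0) (\<lambda>\<epsilon>. ereal \<epsilon> * G \<epsilon>)"
proof -
  have "ereal \<epsilon> * G (\<epsilon> / \<theta>) = ereal \<theta> * (ereal (\<epsilon> / \<theta>) * G (\<epsilon> / \<theta>))" for \<epsilon>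
    using assms by (simp add: mult.assoc[symmetric])
  then have "Limsup (at_right 0) (\<lambda>\<epsilon>. ereal \<epsilon> * G (\<epsilon> / \<theta>))
      = ereal \<theta> * Limsup (at_right 0) (\<lambda>\<epsilon>. ereal (\<epsilon> / \<theta>) * G (\<epsilon> / \<theta>))"
    using assms by (simp add: Limsup_ereal_mult_left)
  also have "Limsup (at_right 0) (\<lambda>\<epsilon>. ereal (\<epsilon> / \<theta>) * G (\<epsilon> / \<theta>))
      = Limsup (at_right 0) (\<lambda>\<epsilon>. ereal \<epsilon> * G \<epsilon>)"
    using Limsup_filtermap_eq[of "\<lambda>x. x / \<theta>" "at_right 0" "\<lambda>\<epsilon>. ereal \<epsilon> * G \<epsilon>"] assms
    by (simp add: inj_def filtermap_divide_at_right_0)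
  finally show ?thesis .
qed

lemma Liminf_le_Limsup_frequently:
  fixes f g :: "'a \<Rightarrow> 'b::complete_linorder"
  assumes "frequently (\<lambda>x. f x \<le> g x) F"
  shows "Liminf F f \<le> Limsup F g"
  unfolding Liminf_def Limsup_def
proof (intro SUP_least INF_greatest)
  fix P Q assume "P \<in> {P. eventually P F}" "Q \<in> {P. eventually P F}"
  then have "frequently (\<lambda>x. (P x \<and> Q x) \<and> f x \<le> g x) F"
    using frequently_eventually_conj[OF assms eventually_conj] by simp
  then obtain x where "P x" "Q x" "f x \<le> g x"
    by (auto dest: frequently_ex)
  then have "Inf (f ` Collect P) \<le> f x" "g x \<le> Sup (g ` Collect Q)"
    by (auto intro: INF_lower SUP_upper)
  with \<open>f x \<le> g x\<close> show "Inf (f ` Collect P) \<le> Sup (g ` Collect Q)"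
    by (meson order_trans)
qed

lemma ereal_mult_inverse_cancel:
  assumes "c \<noteq> 0"
  shows "ereal (1 / c) * (ereal c * y) = y" "ereal c * (ereal (1 / c) * y) = y"
  using assms by (simp_all add: mult.assoc[symmetric])

lemma INF_ereal_mult_left:
  assumes "c > 0"
  shows "(INF x\<in>A. ereal c * f x) = ereal c * (INF x\<in>A. f x)"
proof (rule antisym)
  have le: "ereal d * (INF x\<in>A. g x) \<le> (INF x\<in>A. ereal d * g x)" if "d > 0" for d and g :: "_ \<Rightarrow> ereal"
    using that by (intro INF_greatest ereal_mult_left_mono INF_lower) auto
  then show "ereal c * (INF x\<in>A. f x) \<le> (INF x\<in>A. ereal c * f x)"
    using assms .
  have "(INF x\<in>A. ereal c * f x) = ereal c * (ereal (1 / c) * (INF x\<in>A. ereal c * f x))"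
    using assms by (simp only: ereal_mult_inverse_cancel)
  also have "\<dots> \<le> ereal c * (INF x\<in>A. ereal (1 / c) * (ereal c * f x))"
    using assms by (intro ereal_mult_left_mono le) auto
  also have "\<dots> = ereal c * (INF x\<in>A. f x)"
    using assms by (simp only: ereal_mult_inverse_cancel)
  finally show "(INF x\<in>A. ereal c * f x) \<le> ereal c * (INF x\<in>A. f x)" .
qed

lemma elog_mono: "x \<le> y \<Longrightarrow> elog x \<le> elog y"
  by (cases x; cases y) (auto simp: elog_def)

lemma elog_mult_exp: "elog (x * ereal (exp a)) = elog x + ereal a"
  by (cases x) (auto simp: elog_def ln_mult mult_le_0_iff)

lemma exp_le_if_less_elog:
  assumes "\<epsilon> > 0" "ereal c < ereal \<epsilon> * elog x"
  shows "ereal (exp (c / \<epsilon>)) \<le> x"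
proof (cases x)
  case (real r)
  with assms have "r > 0" "c < \<epsilon> * ln r"
    by (auto simp: elog_def split: if_splits)
  with assms(1) have "c / \<epsilon> < ln r"
    by (simp add: pos_divide_less_eq mult.commute)
  then show ?thesis
    using real \<open>r > 0\<close> by (metis exp_less_mono exp_ln less_imp_le ereal_less_eq(3))
qed (use assms in \<open>auto simp: elog_def\<close>)

lemma lower_semicont_compose:
  assumes "lower_semicont f" "\<And>x. isCont g x"
  shows "lower_semicont (\<lambda>x. f (g x))"
  unfolding lower_semicont_def
proof (intro allI impI)
  fix x c assume "c < f (g x)"
  then have "eventually (\<lambda>y. c < f y) (nhds (g x))"
    using assms(1) unfolding lower_semicont_def by blast
  moreover have "filterlim g (nhds (g x)) (nhds x)"
    using assms(2)[of x] by (simp add: isCont_def tendsto_at_iff_tendsto_nhds)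
  ultimately show "eventually (\<lambda>y. c < f (g y)) (nhds x)"
    unfolding filterlim_iff by blast
qed

lemma lower_semicont_cmult:
  assumes "lower_semicont f" "c > 0"
  shows "lower_semicont (\<lambda>x. ereal c * f x)"
  unfolding lower_semicont_def
proof (intro allI impI)
  note cancel = ereal_mult_inverse_cancel[of c, OF less_imp_neq[OF assms(2), symmetric]]
  fix x a assume "a < ereal c * f x"
  then have "ereal (1 / c) * a < ereal (1 / c) * (ereal c * f x)"
    using assms(2) by (intro ereal_mult_strict_left_mono) auto
  then have "eventually (\<lambda>y. ereal (1 / c) * a < f y) (nhds x)"
    using assms(1) unfolding cancel lower_semicont_def by blast
  then show "eventually (\<lambda>y. a < ereal c * f y) (nhds x)"
  proof (rule eventually_mono)
    fix y assume "ereal (1 / c) * a < f y"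
    then have "ereal c * (ereal (1 / c) * a) < ereal c * f y"
      using assms(2) by (intro ereal_mult_strict_left_mono) auto
    then show "a < ereal c * f y"
      by (simp only: cancel)
  qed
qed

lemma lower_semicont_le_if_INF_cball_le:
  fixes f :: "'a::metric_space \<Rightarrow> ereal"
  assumes lsc: "lower_semicont f" and le: "\<And>r. r > 0 \<Longrightarrow> (INF y\<in>cball x r. f y) \<le> a"
  shows "f x \<le> a"
proof (rule ccontr)
  assume "\<not> f x \<le> a"
  then have "a < f x"
    by (simp add: not_le)
  then obtain s where "a < s" "s < f x"
    using dense by blast
  then obtain e where "e > 0" and e: "\<And>y. dist y x < e \<Longrightarrow> s < f y"
    using lsc unfolding lower_semicont_def eventually_nhds_metric by blast
  have "s \<le> (INF y\<in>cball x (e / 2). f y)"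
    using \<open>e > 0\<close> by (intro INF_greatest less_imp_le e) (simp add: dist_commute)
  then show False
    using le[of "e / 2"] \<open>e > 0\<close> \<open>a < s\<close> by simp
qed

lemma lower_semicont_override_open:
  assumes "lower_semicont f" "open A"
  shows "lower_semicont (\<lambda>x. if x \<in> A then \<infinity> else f x)"
  unfolding lower_semicont_def
proof (intro allI impI)
  fix x c assume c: "c < (if x \<in> A then \<infinity> else f x)"
  show "eventually (\<lambda>y. c < (if y \<in> A then \<infinity> else f y)) (nhds x)"
  proof (cases "x \<in> A")
    case True
    with c have "c < \<infinity>"
      by simp
    with eventually_nhds_in_open[OF assms(2) True] show ?thesis
      by (auto elim: eventually_mono)
  next
    case False
    with c assms(1) have "eventually (\<lambda>y. c < f y) (nhds x)"
      unfolding lower_semicont_def by simp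
    then show ?thesis
      by (rule eventually_mono) auto
  qed
qed

section \<open>Time scaling\<close>

definition ldp_lower ::
  "'a::euclidean_space set \<Rightarrow> 'w measure \<Rightarrow> ('a \<Rightarrow> 'w measure) \<Rightarrow> (real \<Rightarrow> 'w \<Rightarrow> 'a) \<Rightarrow> real
     \<Rightarrow> 'a \<Rightarrow> 'a set \<Rightarrow> real \<Rightarrow> ereal" where
  "ldp_lower E \<Omega> P Z T q U \<delta> = Liminf (at_right 0) (\<lambda>\<epsilon>. ereal \<epsilon> *
     elog (INF z\<in>{z\<in>E. dist (\<epsilon> *\<^sub>R z) q < \<delta>}. ereal (scaled_prob \<Omega> P Z T \<epsilon> z U)))"

definition ldp_upper ::
  "'a::euclidean_space set \<Rightarrow> 'w measure \<Rightarrow> ('a \<Rightarrow> 'w measure) \<Rightarrow> (real \<Rightarrow> 'w \<Rightarrow> 'a) \<Rightarrow> real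
     \<Rightarrow> 'a \<Rightarrow> 'a set \<Rightarrow> real \<Rightarrow> ereal" where
  "ldp_upper E \<Omega> P Z T q V \<delta> = Limsup (at_right 0) (\<lambda>\<epsilon>. ereal \<epsilon> *
     elog (SUP z\<in>{z\<in>E. dist (\<epsilon> *\<^sub>R z) q < \<delta>}. ereal (scaled_prob \<Omega> P Z T \<epsilon> z V)))"

lemma weak_LDP_iff:
  "weak_LDP E \<Omega> P Z T I \<longleftrightarrow>
     (\<forall>q q'. 0 \<le> I q q') \<and>
     lower_semicont (\<lambda>(q, q'). I q q') \<and>
     (\<forall>q U. open U \<longrightarrow> (\<exists>L. (ldp_lower E \<Omega> P Z T q U \<longlongrightarrow> L) (at_right 0) \<and>
        - (INF q'\<in>U. I q q') \<le> L)) \<and>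
     (\<forall>q V. compact V \<longrightarrow> (\<exists>L. (ldp_upper E \<Omega> P Z T q V \<longlongrightarrow> L) (at_right 0) \<and>
        L \<le> - (INF q'\<in>V. I q q')))"
  unfolding weak_LDP_def ldp_lower_def[abs_def] ldp_upper_def[abs_def] by simp

lemma weak_LDP_nonneg: "weak_LDP E \<Omega> P Z T I \<Longrightarrow> 0 \<le> I q q'"
  unfolding weak_LDP_iff by blast

lemma weak_LDP_lower_semicont: "weak_LDP E \<Omega> P Z T I \<Longrightarrow> lower_semicont (\<lambda>(q, q'). I q q')"
  unfolding weak_LDP_iff by blast

lemma weak_LDP_lower_bound:
  assumes "weak_LDP E \<Omega> P Z T I" "open U"
  obtains L where "(ldp_lower E \<Omega> P Z T q U \<longlongrightarrow> L) (at_right 0)" "- (INF q'\<in>U. I q q') \<le> L"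
  using assms unfolding weak_LDP_iff by blast

lemma weak_LDP_upper_bound:
  assumes "weak_LDP E \<Omega> P Z T I" "compact V"
  obtains L where "(ldp_upper E \<Omega> P Z T q V \<longlongrightarrow> L) (at_right 0)" "L \<le> - (INF q'\<in>V. I q q')"
  using assms unfolding weak_LDP_iff by blast

lemma scaled_prob_time_scale:
  fixes U :: "'a::euclidean_space set"
  assumes "\<theta> > 0"
  shows "scaled_prob \<Omega> P Z (\<theta> * T) \<epsilon> z U
    = scaled_prob \<Omega> P Z T (\<epsilon> / \<theta>) z (scaleR (1 / \<theta>) ` U)"
proof -
  have "inj (scaleR (1 / \<theta>) :: 'a \<Rightarrow> 'a)"
    using assms by (simp add: inj_on_def)
  moreover have "(\<epsilon> / \<theta>) *\<^sub>R x = scaleR (1 / \<theta>) (\<epsilon> *\<^sub>R x)" for x :: 'a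
    by simp
  ultimately have mem: "\<epsilon> *\<^sub>R x \<in> U \<longleftrightarrow> (\<epsilon> / \<theta>) *\<^sub>R x \<in> scaleR (1 / \<theta>) ` U" for x :: 'a
    by (simp only: inj_image_mem_iff)
  have time: "\<theta> * T / \<epsilon> = T / (\<epsilon> / \<theta>)"
    using assms by simp
  show ?thesis
    unfolding scaled_prob_def time mem ..
qed

lemma start_nbhd_scale:
  fixes q :: "'a::real_normed_vector"
  assumes "\<theta> > 0"
  shows "{z\<in>E. dist (\<epsilon> *\<^sub>R z) q < \<delta>} = {z\<in>E. dist ((\<epsilon> / \<theta>) *\<^sub>R z) ((1 / \<theta>) *\<^sub>R q) < \<delta> / \<theta>}"
proof -
  have "(\<epsilon> / \<theta>) *\<^sub>R z - (1 / \<theta>) *\<^sub>R q = (1 / \<theta>) *\<^sub>R (\<epsilon> *\<^sub>R z - q)" for z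
    by (simp add: algebra_simps)
  then have "dist ((\<epsilon> / \<theta>) *\<^sub>R z) ((1 / \<theta>) *\<^sub>R q) = dist (\<epsilon> *\<^sub>R z) q / \<theta>" for z
    using assms by (simp add: dist_norm)
  then show ?thesis
    using assms by (simp add: divide_less_cancel)
qed

lemma ldp_lower_time_scale:
  fixes q :: "'a::euclidean_space"
  assumes "\<theta> > 0"
  shows "ldp_lower E \<Omega> P Z (\<theta> * T) q U \<delta>
    = ereal \<theta> * ldp_lower E \<Omega> P Z T ((1 / \<theta>) *\<^sub>R q) (scaleR (1 / \<theta>) ` U) (\<delta> / \<theta>)"
  unfolding ldp_lower_def scaled_prob_time_scale[OF assms] start_nbhd_scale[OF assms, of _ _ q \<delta>]
  by (rule Liminf_at_right_0_rescale[OF assms])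

lemma ldp_upper_time_scale:
  fixes q :: "'a::euclidean_space"
  assumes "\<theta> > 0"
  shows "ldp_upper E \<Omega> P Z (\<theta> * T) q V \<delta>
    = ereal \<theta> * ldp_upper E \<Omega> P Z T ((1 / \<theta>) *\<^sub>R q) (scaleR (1 / \<theta>) ` V) (\<delta> / \<theta>)"
  unfolding ldp_upper_def scaled_prob_time_scale[OF assms] start_nbhd_scale[OF assms, of _ _ q \<delta>]
  by (rule Limsup_at_right_0_rescale[OF assms])

lemma weak_LDP_time_scale:
  fixes E :: "'a::euclidean_space set"
  assumes W: "weak_LDP E \<Omega> P Z T J" and "\<theta> > 0"
  shows "weak_LDP E \<Omega> P Z (\<theta> * T) (\<lambda>q q'. ereal \<theta> * J ((1 / \<theta>) *\<^sub>R q) ((1 / \<theta>) *\<^sub>R q'))"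
proof -
  let ?s = "scaleR (1 / \<theta>) :: 'a \<Rightarrow> 'a"
  have inf: "(INF q'\<in>U. ereal \<theta> * J (?s q) (?s q')) = ereal \<theta> * (INF q'\<in>?s ` U. J (?s q) q')" for q U
    using \<open>\<theta> > 0\<close> by (simp add: INF_ereal_mult_left image_image)
  have lsc: "lower_semicont (\<lambda>(q, q'). ereal \<theta> * J (?s q) (?s q'))"
  proof -
    have "lower_semicont (\<lambda>x. (\<lambda>(q, q'). J q q') (?s (fst x), ?s (snd x)))"
      by (rule lower_semicont_compose[OF weak_LDP_lower_semicont[OF W]]) (intro continuous_intros)
    then have "lower_semicont (\<lambda>x. ereal \<theta> * (\<lambda>(q, q'). J q q') (?s (fst x), ?s (snd x)))"
      using \<open>\<theta> > 0\<close> by (rule lower_semicont_cmult)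
    then show ?thesis
      by (simp add: case_prod_unfold)
  qed
  have lower: "\<exists>L. (ldp_lower E \<Omega> P Z (\<theta> * T) q U \<longlongrightarrow> L) (at_right 0) \<and>
      - (INF q'\<in>U. ereal \<theta> * J (?s q) (?s q')) \<le> L" if "open U" for q U
  proof -
    have "open (?s ` U)"
      using that \<open>\<theta> > 0\<close> by (intro open_scaling) auto
    then obtain L where L: "(ldp_lower E \<Omega> P Z T (?s q) (?s ` U) \<longlongrightarrow> L) (at_right 0)"
      "- (INF q'\<in>?s ` U. J (?s q) q') \<le> L"
      using weak_LDP_lower_bound[OF W] by blast
    have "((\<lambda>\<delta>. ereal \<theta> * ldp_lower E \<Omega> P Z T (?s q) (?s ` U) (\<delta> / \<theta>)) \<longlongrightarrow> ereal \<theta> * L) (at_right 0)"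
      using \<open>\<theta> > 0\<close>
      by (intro tendsto_cmult_ereal filterlim_compose[OF L(1) filterlim_divide_at_right_0]) auto
    moreover have "- (INF q'\<in>U. ereal \<theta> * J (?s q) (?s q')) \<le> ereal \<theta> * L"
      using L(2) \<open>\<theta> > 0\<close> unfolding inf ereal_mult_minus_right[symmetric]
      by (intro ereal_mult_left_mono) auto
    ultimately show ?thesis
      unfolding ldp_lower_time_scale[OF \<open>\<theta> > 0\<close>] by blast
  qed
  have upper: "\<exists>L. (ldp_upper E \<Omega> P Z (\<theta> * T) q V \<longlongrightarrow> L) (at_right 0) \<and>
      L \<le> - (INF q'\<in>V. ereal \<theta> * J (?s q) (?s q'))" if "compact V" for q V
  proof -
    have "compact (?s ` V)"
      using that by (intro compact_scaling)
    then obtain L where L: "(ldp_upper E \<Omega> P Z T (?s q) (?s ` V) \<longlongrightarrow> L) (at_right 0)"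
      "L \<le> - (INF q'\<in>?s ` V. J (?s q) q')"
      using weak_LDP_upper_bound[OF W] by blast
    have "((\<lambda>\<delta>. ereal \<theta> * ldp_upper E \<Omega> P Z T (?s q) (?s ` V) (\<delta> / \<theta>)) \<longlongrightarrow> ereal \<theta> * L) (at_right 0)"
      using \<open>\<theta> > 0\<close>
      by (intro tendsto_cmult_ereal filterlim_compose[OF L(1) filterlim_divide_at_right_0]) auto
    moreover have "ereal \<theta> * L \<le> - (INF q'\<in>V. ereal \<theta> * J (?s q) (?s q'))"
      using L(2) \<open>\<theta> > 0\<close> unfolding inf ereal_mult_minus_right[symmetric]
      by (intro ereal_mult_left_mono) auto
    ultimately show ?thesis
      unfolding ldp_upper_time_scale[OF \<open>\<theta> > 0\<close>] by blast
  qed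
  show ?thesis
    unfolding weak_LDP_iff using weak_LDP_nonneg[OF W] \<open>\<theta> > 0\<close> lsc lower upper by auto
qed

section \<open>Points avoided by the rescaled state space\<close>

definition scaling_avoids :: "'a::real_normed_vector set \<Rightarrow> 'a \<Rightarrow> bool" where
  "scaling_avoids E q \<longleftrightarrow> (\<exists>\<delta>>0. eventually (\<lambda>\<epsilon>. \<forall>z\<in>E. \<delta> \<le> dist (\<epsilon> *\<^sub>R z) q) (at_right 0))"

lemma open_scaling_avoids: "open {q. scaling_avoids E q}"
  unfolding open_dist
proof (intro ballI)
  fix q assume "q \<in> {q. scaling_avoids E q}"
  then obtain \<delta> where "\<delta> > 0" and \<delta>: "eventually (\<lambda>\<epsilon>. \<forall>z\<in>E. \<delta> \<le> dist (\<epsilon> *\<^sub>R z) q) (at_right 0)"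
    unfolding scaling_avoids_def by blast
  have "scaling_avoids E q'" if "dist q' q < \<delta> / 2" for q'
  proof -
    have "eventually (\<lambda>\<epsilon>. \<forall>z\<in>E. \<delta> / 2 \<le> dist (\<epsilon> *\<^sub>R z) q') (at_right 0)"
    proof (rule eventually_mono[OF \<delta>], intro ballI)
      fix \<epsilon> z assume "\<forall>z\<in>E. \<delta> \<le> dist (\<epsilon> *\<^sub>R z) q" "z \<in> E"
      then have "\<delta> \<le> dist (\<epsilon> *\<^sub>R z) q"
        by blast
      with dist_triangle[of "\<epsilon> *\<^sub>R z" q q'] that show "\<delta> / 2 \<le> dist (\<epsilon> *\<^sub>R z) q'"
        by linarith
    qed
    with \<open>\<delta> > 0\<close> show ?thesis
      unfolding scaling_avoids_def by (intro exI[of _ "\<delta> / 2"]) auto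
  qed
  with \<open>\<delta> > 0\<close> show "\<exists>e>0. \<forall>y. dist y q < e \<longrightarrow> y \<in> {q. scaling_avoids E q}"
    by (intro exI[of _ "\<delta> / 2"]) auto
qed

lemma scaling_avoids_scaleR:
  assumes "c > 0" "scaling_avoids E q"
  shows "scaling_avoids E (c *\<^sub>R q)"
proof -
  obtain \<delta> where "\<delta> > 0" and \<delta>: "eventually (\<lambda>\<epsilon>. \<forall>z\<in>E. \<delta> \<le> dist (\<epsilon> *\<^sub>R z) q) (at_right 0)"
    using assms(2) unfolding scaling_avoids_def by blast
  have dist_eq: "dist (\<epsilon> *\<^sub>R z) (c *\<^sub>R q) = c * dist ((\<epsilon> / c) *\<^sub>R z) q" for \<epsilon> z
  proof -
    have "\<epsilon> *\<^sub>R z - c *\<^sub>R q = c *\<^sub>R ((\<epsilon> / c) *\<^sub>R z - q)"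
      using assms(1) by (simp add: algebra_simps)
    then show ?thesis
      using assms(1) by (simp add: dist_norm)
  qed
  have "eventually (\<lambda>\<epsilon>. \<forall>z\<in>E. \<delta> \<le> dist (\<epsilon> *\<^sub>R z) q) (filtermap (\<lambda>x. x / c) (at_right 0))"
    using \<delta> by (simp only: filtermap_divide_at_right_0[OF assms(1)])
  then have "eventually (\<lambda>\<epsilon>. \<forall>z\<in>E. \<delta> \<le> dist ((\<epsilon> / c) *\<^sub>R z) q) (at_right 0)"
    unfolding eventually_filtermap .
  then have "eventually (\<lambda>\<epsilon>. \<forall>z\<in>E. c * \<delta> \<le> dist (\<epsilon> *\<^sub>R z) (c *\<^sub>R q)) (at_right 0)"
    by (rule eventually_mono) (use assms(1) in \<open>simp add: dist_eq\<close>)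
  with \<open>\<delta> > 0\<close> assms(1) show ?thesis
    unfolding scaling_avoids_def by (intro exI[of _ "c * \<delta>"]) auto
qed

lemma scaling_avoids_eventually_empty:
  assumes "scaling_avoids E q"
  shows "eventually (\<lambda>\<delta>. eventually (\<lambda>\<epsilon>. \<epsilon> > 0 \<and> {z\<in>E. dist (\<epsilon> *\<^sub>R z) q < \<delta>} = {}) (at_right 0))
    (at_right 0)"
proof -
  obtain \<delta>\<^sub>0 where "\<delta>\<^sub>0 > 0" and \<delta>\<^sub>0: "eventually (\<lambda>\<epsilon>. \<forall>z\<in>E. \<delta>\<^sub>0 \<le> dist (\<epsilon> *\<^sub>R z) q) (at_right 0)"
    using assms unfolding scaling_avoids_def by blast
  have "eventually (\<lambda>\<epsilon>. \<epsilon> > 0 \<and> {z\<in>E. dist (\<epsilon> *\<^sub>R z) q < \<delta>} = {}) (at_right 0)" if "\<delta> \<le> \<delta>\<^sub>0" for \<delta>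
    using eventually_conj[OF eventually_at_right_less \<delta>\<^sub>0] by (rule eventually_mono) (use that in force)
  with \<open>\<delta>\<^sub>0 > 0\<close> show ?thesis
    unfolding eventually_at_right_field[of _ 0] by (intro exI[of _ \<delta>\<^sub>0]) auto
qed

lemma ldp_lower_eventually_infinity:
  assumes "scaling_avoids E q"
  shows "eventually (\<lambda>\<delta>. ldp_lower E \<Omega> P Z T q U \<delta> = \<infinity>) (at_right 0)"
  using scaling_avoids_eventually_empty[OF assms]
proof (rule eventually_mono)
  fix \<delta> assume "eventually (\<lambda>\<epsilon>. \<epsilon> > 0 \<and> {z\<in>E. dist (\<epsilon> *\<^sub>R z) q < \<delta>} = {}) (at_right 0)"
  then have "eventually (\<lambda>\<epsilon>. ereal \<epsilon> *
      elog (INF z\<in>{z\<in>E. dist (\<epsilon> *\<^sub>R z) q < \<delta>}. ereal (scaled_prob \<Omega> P Z T \<epsilon> z U)) = \<infinity>) (at_right 0)"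
  proof (rule eventually_mono)
    fix \<epsilon> :: real assume "\<epsilon> > 0 \<and> {z\<in>E. dist (\<epsilon> *\<^sub>R z) q < \<delta>} = {}"
    then show "ereal \<epsilon> * elog (INF z\<in>{z\<in>E. dist (\<epsilon> *\<^sub>R z) q < \<delta>}. ereal (scaled_prob \<Omega> P Z T \<epsilon> z U)) = \<infinity>"
      by (simp only: image_empty) (simp add: elog_def top_ereal_def)
  qed
  from Liminf_eq[OF this] have "ldp_lower E \<Omega> P Z T q U \<delta> = Liminf (at_right 0) (\<lambda>_::real. \<infinity>)"
    unfolding ldp_lower_def .
  then show "ldp_lower E \<Omega> P Z T q U \<delta> = \<infinity>"
    by (simp add: Liminf_const)
qed

lemma ldp_upper_eventually_minus_infinity:
  assumes "scaling_avoids E q"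
  shows "eventually (\<lambda>\<delta>. ldp_upper E \<Omega> P Z T q V \<delta> = -\<infinity>) (at_right 0)"
  using scaling_avoids_eventually_empty[OF assms]
proof (rule eventually_mono)
  fix \<delta> assume "eventually (\<lambda>\<epsilon>. \<epsilon> > 0 \<and> {z\<in>E. dist (\<epsilon> *\<^sub>R z) q < \<delta>} = {}) (at_right 0)"
  then have "eventually (\<lambda>\<epsilon>. ereal \<epsilon> *
      elog (SUP z\<in>{z\<in>E. dist (\<epsilon> *\<^sub>R z) q < \<delta>}. ereal (scaled_prob \<Omega> P Z T \<epsilon> z V)) = -\<infinity>) (at_right 0)"
  proof (rule eventually_mono)
    fix \<epsilon> :: real assume "\<epsilon> > 0 \<and> {z\<in>E. dist (\<epsilon> *\<^sub>R z) q < \<delta>} = {}"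
    then show "ereal \<epsilon> * elog (SUP z\<in>{z\<in>E. dist (\<epsilon> *\<^sub>R z) q < \<delta>}. ereal (scaled_prob \<Omega> P Z T \<epsilon> z V)) = -\<infinity>"
      by (simp only: image_empty) (simp add: elog_def bot_ereal_def)
  qed
  from Limsup_eq[OF this] have "ldp_upper E \<Omega> P Z T q V \<delta> = Limsup (at_right 0) (\<lambda>_::real. -\<infinity>)"
    unfolding ldp_upper_def .
  then show "ldp_upper E \<Omega> P Z T q V \<delta> = -\<infinity>"
    by (simp add: Limsup_const)
qed

lemma weak_LDP_infinite_where_avoided:
  fixes E :: "'a::euclidean_space set"
  assumes W: "weak_LDP E \<Omega> P Z T I"
  shows "weak_LDP E \<Omega> P Z T (\<lambda>q q'. if scaling_avoids E q then \<infinity> else I q q')"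
proof -
  have "(\<lambda>(q, q'). if scaling_avoids E q then \<infinity> else I q q')
      = (\<lambda>x. if x \<in> fst -` {q. scaling_avoids E q} then \<infinity> else (\<lambda>(q, q'). I q q') x)"
    by auto
  moreover have "lower_semicont \<dots>"
    using weak_LDP_lower_semicont[OF W]
    by (intro lower_semicont_override_open open_vimage_fst open_scaling_avoids)
  ultimately have lsc: "lower_semicont (\<lambda>(q, q'). if scaling_avoids E q then \<infinity> else I q q')"
    by simp
  have lower: "\<exists>L. (ldp_lower E \<Omega> P Z T q U \<longlongrightarrow> L) (at_right 0) \<and>
      - (INF q'\<in>U. if scaling_avoids E q then \<infinity> else I q q') \<le> L" if "open U" for q U
  proof (cases "scaling_avoids E q")
    case True
    then show ?thesis
      by (intro exI[of _ \<infinity>]) (auto intro: tendsto_eventually ldp_lower_eventually_infinity)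
  qed (use W that in \<open>auto simp: weak_LDP_iff\<close>)
  have upper: "\<exists>L. (ldp_upper E \<Omega> P Z T q V \<longlongrightarrow> L) (at_right 0) \<and>
      L \<le> - (INF q'\<in>V. if scaling_avoids E q then \<infinity> else I q q')" if "compact V" for q V
  proof (cases "scaling_avoids E q")
    case True
    then show ?thesis
      by (intro exI[of _ "-\<infinity>"]) (auto intro: tendsto_eventually ldp_upper_eventually_minus_infinity)
  qed (use W that in \<open>auto simp: weak_LDP_iff\<close>)
  show ?thesis
    unfolding weak_LDP_iff using weak_LDP_nonneg[OF W] lsc lower upper by auto
qed

section \<open>Subadditivity from the Markov property\<close>

lemma markov_process_prob_space:
  assumes "markov_process E \<Omega> P Z" "z \<in> E"
  shows "prob_space (P z)" "sets (P z) = sets \<Omega>" "space (P z) = space \<Omega>"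
  using assms sets_eq_imp_space_eq unfolding markov_process_def by auto

lemma markov_process_event_sets:
  assumes "markov_process E \<Omega> P Z" "t \<ge> 0" "A \<in> sets borel"
  shows "{\<omega>\<in>space \<Omega>. Z t \<omega> \<in> A} \<in> sets \<Omega>"
proof -
  have "Z t \<in> borel_measurable \<Omega>"
    using assms(1,2) unfolding markov_process_def by blast
  then show ?thesis
    using assms(3) by measurable
qed

lemma markov_process_transition_measurable:
  assumes mp: "markov_process E \<Omega> P Z" and "s \<ge> 0" "t \<ge> 0" "A \<in> sets borel"
  shows "(\<lambda>\<omega>. measure (P (Z s \<omega>)) {\<omega>'\<in>space \<Omega>. Z t \<omega>' \<in> A}) \<in> borel_measurable \<Omega>"
proof -
  have "Z s \<in> measurable \<Omega> (restrict_space borel E)"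
    using mp \<open>s \<ge> 0\<close> unfolding markov_process_def by (intro measurable_restrict_space2) auto
  moreover have "(\<lambda>x. measure (P x) {\<omega>\<in>space \<Omega>. Z t \<omega> \<in> A}) \<in> borel_measurable (restrict_space borel E)"
    using mp \<open>t \<ge> 0\<close> assms(4) unfolding markov_process_def by blast
  ultimately show ?thesis
    by (rule measurable_compose)
qed

lemma markov_process_chain_lower_bound:
  assumes mp: "markov_process E \<Omega> P Z" and z: "z \<in> E" and "s \<ge> 0" "t \<ge> 0"
    and A: "A \<in> sets borel" and B: "B \<in> sets borel"
    and hit: "\<And>x. x \<in> E \<Longrightarrow> x \<in> B \<Longrightarrow> b \<le> measure (P x) {\<omega>\<in>space \<Omega>. Z t \<omega> \<in> A}"
  shows "measure (P z) {\<omega>\<in>space \<Omega>. Z s \<omega> \<in> B} * b \<le> measure (P z) {\<omega>\<in>space \<Omega>. Z (s + t) \<omega> \<in> A}"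
proof -
  interpret prob_space "P z"
    by (rule markov_process_prob_space[OF mp z])
  note sets = markov_process_prob_space(2,3)[OF mp z]
  have ZE: "Z s \<omega> \<in> E" if "\<omega> \<in> space \<Omega>" for \<omega>
    using mp that \<open>s \<ge> 0\<close> unfolding markov_process_def by blast
  define F where "F = {\<omega>\<in>space \<Omega>. Z s \<omega> \<in> B}"
  define g where "g \<omega> = measure (P (Z s \<omega>)) {\<omega>'\<in>space \<Omega>. Z t \<omega>' \<in> A}" for \<omega>
  have F: "F \<in> sets \<Omega>"
    unfolding F_def using markov_process_event_sets[OF mp \<open>s \<ge> 0\<close> B] .
  have "F = Z s -` B \<inter> space \<Omega>"
    by (auto simp: F_def)
  then have "F \<in> nat_filt \<Omega> Z s"
    unfolding nat_filt_def using \<open>s \<ge> 0\<close> B by (intro sigma_sets.Basic UN_I[of s]) auto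
  then have markov: "measure (P z) (F \<inter> {\<omega>\<in>space \<Omega>. Z (s + t) \<omega> \<in> A}) = (\<integral>\<omega>. indicator F \<omega> * g \<omega> \<partial>P z)"
    using mp z \<open>s \<ge> 0\<close> \<open>t \<ge> 0\<close> A unfolding markov_process_def g_def by blast
  have g_bounds: "0 \<le> g \<omega> \<and> g \<omega> \<le> 1" if "\<omega> \<in> space \<Omega>" for \<omega>
    using prob_space.prob_le_1[OF markov_process_prob_space(1)[OF mp ZE[OF that]]]
    by (simp add: g_def)
  have g: "g \<in> borel_measurable \<Omega>"
    unfolding g_def using mp \<open>s \<ge> 0\<close> \<open>t \<ge> 0\<close> A by (rule markov_process_transition_measurable)
  have integrable: "integrable (P z) (\<lambda>\<omega>. indicator F \<omega> * f \<omega>)"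
    if "f \<in> borel_measurable \<Omega>" "\<And>\<omega>. \<omega> \<in> space \<Omega> \<Longrightarrow> \<bar>f \<omega>\<bar> \<le> C" for f :: "_ \<Rightarrow> real" and C
  proof (rule integrable_const_bound[where B = C])
    show "AE \<omega> in P z. norm (indicator F \<omega> * f \<omega>) \<le> C"
      using that(2) sets by (intro AE_I2) (auto simp: indicator_def intro: order_trans[OF abs_ge_zero that(2)])
    show "(\<lambda>\<omega>. indicator F \<omega> * f \<omega>) \<in> borel_measurable (P z)"
      unfolding measurable_cong_sets[OF sets(1) refl] using that(1) F by measurable
  qed
  have g_hit: "b \<le> g \<omega>" if "\<omega> \<in> F" for \<omega>
    using hit ZE that by (simp add: F_def g_def)
  have "measure (P z) F * b = (\<integral>\<omega>. indicator F \<omega> * b \<partial>P z)"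
    using F sets by simp
  also have "\<dots> \<le> (\<integral>\<omega>. indicator F \<omega> * g \<omega> \<partial>P z)"
    using g g_bounds g_hit
    by (intro integral_mono integrable) (auto simp: indicator_def)
  also have "\<dots> \<le> measure (P z) {\<omega>\<in>space \<Omega>. Z (s + t) \<omega> \<in> A}"
    unfolding markov[symmetric] using markov_process_event_sets[OF mp _ A] \<open>s \<ge> 0\<close> \<open>t \<ge> 0\<close> sets
    by (intro finite_measure_mono) auto
  finally show ?thesis
    by (simp add: F_def)
qed

lemma scaled_prob_event_sets:
  assumes "markov_process E \<Omega> P Z" "\<epsilon> > 0" "T \<ge> 0" "A \<in> sets borel"
  shows "{\<omega>\<in>space \<Omega>. \<epsilon> *\<^sub>R Z (T / \<epsilon>) \<omega> \<in> A} \<in> sets \<Omega>"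
proof -
  have "scaleR \<epsilon> -` A \<in> sets borel"
    by (rule measurable_sets_borel[OF _ assms(4)]) simp
  then show ?thesis
    using markov_process_event_sets[OF assms(1), of "T / \<epsilon>" "scaleR \<epsilon> -` A"] assms(2,3) by simp
qed

lemma scaled_prob_mono:
  assumes "markov_process E \<Omega> P Z" "z \<in> E" "\<epsilon> > 0" "T \<ge> 0" "A \<subseteq> B" "B \<in> sets borel"
  shows "scaled_prob \<Omega> P Z T \<epsilon> z A \<le> scaled_prob \<Omega> P Z T \<epsilon> z B"
proof -
  interpret prob_space "P z"
    by (rule markov_process_prob_space[OF assms(1,2)])
  show ?thesis
    unfolding scaled_prob_def
    using scaled_prob_event_sets[OF assms(1,3,4,6)] markov_process_prob_space(2)[OF assms(1,2)] assms(5)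
    by (intro finite_measure_mono) auto
qed

lemma scaled_prob_chain_lower_bound:
  assumes mp: "markov_process E \<Omega> P Z" and "z \<in> E" "\<epsilon> > 0" "T \<ge> 0" "T' \<ge> 0"
    and A: "A \<in> sets borel" and B: "B \<in> sets borel"
    and hit: "\<And>z'. z' \<in> E \<Longrightarrow> \<epsilon> *\<^sub>R z' \<in> B \<Longrightarrow> b \<le> scaled_prob \<Omega> P Z T' \<epsilon> z' A"
  shows "scaled_prob \<Omega> P Z T \<epsilon> z B * b \<le> scaled_prob \<Omega> P Z (T + T') \<epsilon> z A"
proof -
  have "scaleR \<epsilon> -` A \<in> sets borel" "scaleR \<epsilon> -` B \<in> sets borel"
    by (rule measurable_sets_borel[OF _ A], simp) (rule measurable_sets_borel[OF _ B], simp)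
  moreover have "(T + T') / \<epsilon> = T / \<epsilon> + T' / \<epsilon>"
    by (simp add: add_divide_distrib)
  ultimately show ?thesis
    using markov_process_chain_lower_bound[OF mp \<open>z \<in> E\<close>, of "T / \<epsilon>" "T' / \<epsilon>" "scaleR \<epsilon> -` A" "scaleR \<epsilon> -` B" b]
      hit \<open>\<epsilon> > 0\<close> \<open>T \<ge> 0\<close> \<open>T' \<ge> 0\<close>
    unfolding scaled_prob_def by simp
qed

lemma scaled_log_prob_chain:
  assumes mp: "markov_process E \<Omega> P Z" and "\<epsilon> > 0" "T \<ge> 0" "T' \<ge> 0"
    and S: "S \<subseteq> E" "S \<noteq> {}"
    and U: "U \<in> sets borel" and V: "U \<subseteq> V" "V \<in> sets borel"
    and hit: "\<And>z'. z' \<in> E \<Longrightarrow> dist (\<epsilon> *\<^sub>R z') q' < \<rho> \<Longrightarrow> exp (c / \<epsilon>) \<le> scaled_prob \<Omega> P Z T' \<epsilon> z' U"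
  shows "ereal \<epsilon> * elog (INF z\<in>S. ereal (scaled_prob \<Omega> P Z T \<epsilon> z (ball q' \<rho>))) + ereal c
    \<le> ereal \<epsilon> * elog (SUP z\<in>S. ereal (scaled_prob \<Omega> P Z (T + T') \<epsilon> z V))"
proof -
  let ?inf = "INF z\<in>S. ereal (scaled_prob \<Omega> P Z T \<epsilon> z (ball q' \<rho>))"
  let ?sup = "SUP z\<in>S. ereal (scaled_prob \<Omega> P Z (T + T') \<epsilon> z V)"
  obtain z where "z \<in> S"
    using S by blast
  then have "z \<in> E"
    using S by blast
  have "?inf \<le> ereal (scaled_prob \<Omega> P Z T \<epsilon> z (ball q' \<rho>))"
    using \<open>z \<in> S\<close> by (rule INF_lower)
  then have "?inf * ereal (exp (c / \<epsilon>)) \<le> ereal (scaled_prob \<Omega> P Z T \<epsilon> z (ball q' \<rho>)) * ereal (exp (c / \<epsilon>))"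
    by (rule ereal_mult_right_mono) simp
  also have "\<dots> \<le> ereal (scaled_prob \<Omega> P Z (T + T') \<epsilon> z U)"
    using scaled_prob_chain_lower_bound[OF mp \<open>z \<in> E\<close> \<open>\<epsilon> > 0\<close> \<open>T \<ge> 0\<close> \<open>T' \<ge> 0\<close> U, of "ball q' \<rho>"] hit
    by (simp add: dist_commute)
  also have "\<dots> \<le> ereal (scaled_prob \<Omega> P Z (T + T') \<epsilon> z V)"
    using \<open>z \<in> E\<close> \<open>\<epsilon> > 0\<close> \<open>T \<ge> 0\<close> \<open>T' \<ge> 0\<close> V by (simp add: scaled_prob_mono[OF mp])
  also have "\<dots> \<le> ?sup"
    using \<open>z \<in> S\<close> by (rule SUP_upper)
  finally have "elog ?inf + ereal (c / \<epsilon>) \<le> elog ?sup"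
    by (metis elog_mono elog_mult_exp)
  then have "ereal \<epsilon> * (elog ?inf + ereal (c / \<epsilon>)) \<le> ereal \<epsilon> * elog ?sup"
    using \<open>\<epsilon> > 0\<close> by (intro ereal_mult_left_mono) auto
  then show ?thesis
    using \<open>\<epsilon> > 0\<close> by (subst (asm) ereal_distrib_left) auto
qed

lemma ldp_lower_add_le_ldp_upper:
  assumes mp: "markov_process E \<Omega> P Z" and "T \<ge> 0" "T' \<ge> 0" "\<delta> > 0"
    and q: "\<not> scaling_avoids E q"
    and U: "U \<in> sets borel" and V: "U \<subseteq> V" "V \<in> sets borel"
    and hit: "eventually (\<lambda>\<epsilon>. \<forall>z'\<in>E. dist (\<epsilon> *\<^sub>R z') q' < \<rho> \<longrightarrow>
      exp (c / \<epsilon>) \<le> scaled_prob \<Omega> P Z T' \<epsilon> z' U) (at_right 0)"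
  shows "ldp_lower E \<Omega> P Z T q (ball q' \<rho>) \<delta> + ereal c \<le> ldp_upper E \<Omega> P Z (T + T') q V \<delta>"
proof -
  have "{z\<in>E. dist (\<epsilon> *\<^sub>R z) q < \<delta>} = {} \<longleftrightarrow> (\<forall>z\<in>E. \<delta> \<le> dist (\<epsilon> *\<^sub>R z) q)" for \<epsilon>
    by (auto simp: not_less)
  then have "frequently (\<lambda>\<epsilon>. {z\<in>E. dist (\<epsilon> *\<^sub>R z) q < \<delta>} \<noteq> {}) (at_right 0)"
    using q \<open>\<delta> > 0\<close> unfolding scaling_avoids_def frequently_def by auto
  from frequently_eventually_conj[OF this eventually_conj[OF hit eventually_at_right_less]]
  have "frequently (\<lambda>\<epsilon>.
      ereal \<epsilon> * elog (INF z\<in>{z\<in>E. dist (\<epsilon> *\<^sub>R z) q < \<delta>}. ereal (scaled_prob \<Omega> P Z T \<epsilon> z (ball q' \<rho>)))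
        + ereal c
      \<le> ereal \<epsilon> * elog (SUP z\<in>{z\<in>E. dist (\<epsilon> *\<^sub>R z) q < \<delta>}. ereal (scaled_prob \<Omega> P Z (T + T') \<epsilon> z V)))
    (at_right 0)"
    by (rule frequently_elim1) (intro scaled_log_prob_chain[OF mp _ \<open>T \<ge> 0\<close> \<open>T' \<ge> 0\<close> _ _ U V]; auto)
  then show ?thesis
    unfolding ldp_lower_def ldp_upper_def
    by (subst Liminf_add_ereal_right[symmetric]) (auto intro: Liminf_le_Limsup_frequently)
qed

lemma weak_LDP_eventually_exp_le:
  assumes W: "weak_LDP E \<Omega> P Z T I" and "open U" "q' \<in> U" and c: "ereal c < - I q q'"
  obtains \<rho> where "\<rho> > 0"
    "eventually (\<lambda>\<epsilon>. \<forall>z\<in>E. dist (\<epsilon> *\<^sub>R z) q < \<rho> \<longrightarrow> exp (c / \<epsilon>) \<le> scaled_prob \<Omega> P Z T \<epsilon> z U)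
      (at_right 0)"
proof -
  obtain L where L: "(ldp_lower E \<Omega> P Z T q U \<longlongrightarrow> L) (at_right 0)" "- (INF y\<in>U. I q y) \<le> L"
    using weak_LDP_lower_bound[OF W \<open>open U\<close>] .
  have "- I q q' \<le> - (INF y\<in>U. I q y)"
    using \<open>q' \<in> U\<close> by (simp add: INF_lower)
  with c L(2) have "ereal c < L"
    by (meson less_le_trans order_trans)
  then have "eventually (\<lambda>\<rho>. \<rho> > 0 \<and> ereal c < ldp_lower E \<Omega> P Z T q U \<rho>) (at_right 0)"
    using eventually_at_right_less order_tendstoD(1)[OF L(1)] by (intro eventually_conj) auto
  then obtain \<rho> where "\<rho> > 0" "ereal c < ldp_lower E \<Omega> P Z T q U \<rho>"
    using eventually_happens'[of "at_right (0::real)"] by auto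
  then have "eventually (\<lambda>\<epsilon>. \<epsilon> > 0 \<and>
      ereal c < ereal \<epsilon> * elog (INF z\<in>{z\<in>E. dist (\<epsilon> *\<^sub>R z) q < \<rho>}. ereal (scaled_prob \<Omega> P Z T \<epsilon> z U)))
    (at_right 0)"
    unfolding ldp_lower_def using eventually_at_right_less by (intro eventually_conj less_LiminfD) auto
  then have "eventually (\<lambda>\<epsilon>. \<forall>z\<in>E. dist (\<epsilon> *\<^sub>R z) q < \<rho> \<longrightarrow> exp (c / \<epsilon>) \<le> scaled_prob \<Omega> P Z T \<epsilon> z U)
    (at_right 0)"
  proof (rule eventually_mono, intro ballI impI)
    fix \<epsilon> z
    assume "\<epsilon> > 0 \<and> ereal c < ereal \<epsilon> *
      elog (INF z\<in>{z\<in>E. dist (\<epsilon> *\<^sub>R z) q < \<rho>}. ereal (scaled_prob \<Omega> P Z T \<epsilon> z U))"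
      and "z \<in> E" "dist (\<epsilon> *\<^sub>R z) q < \<rho>"
    then have "ereal (exp (c / \<epsilon>)) \<le> (INF z\<in>{z\<in>E. dist (\<epsilon> *\<^sub>R z) q < \<rho>}. ereal (scaled_prob \<Omega> P Z T \<epsilon> z U))"
      by (intro exp_le_if_less_elog) auto
    also have "\<dots> \<le> ereal (scaled_prob \<Omega> P Z T \<epsilon> z U)"
      using \<open>z \<in> E\<close> \<open>dist (\<epsilon> *\<^sub>R z) q < \<rho>\<close> by (intro INF_lower) simp
    finally show "exp (c / \<epsilon>) \<le> scaled_prob \<Omega> P Z T \<epsilon> z U"
      by simp
  qed
  with \<open>\<rho> > 0\<close> show ?thesis
    by (rule that)
qed

lemma weak_LDP_chain_INF_cball_le:
  assumes mp: "markov_process E \<Omega> P Z" and "T \<ge> 0" "T' \<ge> 0"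
    and W1: "weak_LDP E \<Omega> P Z T I\<^sub>1" and W2: "weak_LDP E \<Omega> P Z T' I\<^sub>2"
    and W3: "weak_LDP E \<Omega> P Z (T + T') I\<^sub>3"
    and q: "\<not> scaling_avoids E q" and "r > 0" and c: "ereal c < - I\<^sub>2 q' q''"
  shows "(INF y\<in>cball q'' r. I\<^sub>3 q y) \<le> I\<^sub>1 q q' - ereal c"
proof -
  obtain \<rho> where "\<rho> > 0" and hit: "eventually (\<lambda>\<epsilon>. \<forall>z\<in>E. dist (\<epsilon> *\<^sub>R z) q' < \<rho> \<longrightarrow>
      exp (c / \<epsilon>) \<le> scaled_prob \<Omega> P Z T' \<epsilon> z (ball q'' r)) (at_right 0)"
    by (rule weak_LDP_eventually_exp_le[OF W2 open_ball centre_in_ball[THEN iffD2, OF \<open>r > 0\<close>] c])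
  obtain L\<^sub>1 where L\<^sub>1: "(ldp_lower E \<Omega> P Z T q (ball q' \<rho>) \<longlongrightarrow> L\<^sub>1) (at_right 0)"
    "- (INF y\<in>ball q' \<rho>. I\<^sub>1 q y) \<le> L\<^sub>1"
    using weak_LDP_lower_bound[OF W1 open_ball] .
  obtain L\<^sub>3 where L\<^sub>3: "(ldp_upper E \<Omega> P Z (T + T') q (cball q'' r) \<longlongrightarrow> L\<^sub>3) (at_right 0)"
    "L\<^sub>3 \<le> - (INF y\<in>cball q'' r. I\<^sub>3 q y)"
    using weak_LDP_upper_bound[OF W3 compact_cball] .
  have "eventually (\<lambda>\<delta>. ldp_lower E \<Omega> P Z T q (ball q' \<rho>) \<delta> + ereal c
      \<le> ldp_upper E \<Omega> P Z (T + T') q (cball q'' r) \<delta>) (at_right 0)"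
    using eventually_at_right_less
    by (rule eventually_mono) (intro ldp_lower_add_le_ldp_upper[OF mp \<open>T \<ge> 0\<close> \<open>T' \<ge> 0\<close> _ q _ _ _ hit]; auto)
  then have "L\<^sub>1 + ereal c \<le> L\<^sub>3"
    by (intro tendsto_le[OF _ L\<^sub>3(1) tendsto_add_ereal_general1[OF _ L\<^sub>1(1) tendsto_const]]) auto
  moreover have "- I\<^sub>1 q q' \<le> L\<^sub>1"
    using L\<^sub>1(2) \<open>\<rho> > 0\<close> by (meson INF_lower centre_in_ball ereal_minus_le_minus order_trans)
  ultimately have "- I\<^sub>1 q q' + ereal c \<le> - (INF y\<in>cball q'' r. I\<^sub>3 q y)"
    using L\<^sub>3(2) by (meson add_right_mono order_trans)
  then show ?thesis
    by (cases "I\<^sub>1 q q'"; cases "INF y\<in>cball q'' r. I\<^sub>3 q y") auto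
qed

lemma weak_LDP_subadditive:
  assumes mp: "markov_process E \<Omega> P Z" and "T \<ge> 0" "T' \<ge> 0"
    and W1: "weak_LDP E \<Omega> P Z T I\<^sub>1" and W2: "weak_LDP E \<Omega> P Z T' I\<^sub>2"
    and W3: "weak_LDP E \<Omega> P Z (T + T') I\<^sub>3"
    and q: "\<not> scaling_avoids E q"
  shows "I\<^sub>3 q q'' \<le> I\<^sub>1 q q' + I\<^sub>2 q' q''"
proof (rule lower_semicont_le_if_INF_cball_le)
  show "lower_semicont (I\<^sub>3 q)"
    using lower_semicont_compose[OF weak_LDP_lower_semicont[OF W3], of "Pair q"] by simp
  fix r :: real assume "r > 0"
  show "(INF y\<in>cball q'' r. I\<^sub>3 q y) \<le> I\<^sub>1 q q' + I\<^sub>2 q' q''"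
  proof (cases "I\<^sub>2 q' q''")
    case (real a)
    show ?thesis
    proof (rule ereal_le_epsilon2)
      fix \<eta> :: real assume "\<eta> > 0"
      with real have "(INF y\<in>cball q'' r. I\<^sub>3 q y) \<le> I\<^sub>1 q q' - ereal (- a - \<eta>)"
        by (intro weak_LDP_chain_INF_cball_le[OF mp \<open>T \<ge> 0\<close> \<open>T' \<ge> 0\<close> W1 W2 W3 q \<open>r > 0\<close>]) simp
      with real show "(INF y\<in>cball q'' r. I\<^sub>3 q y) \<le> I\<^sub>1 q q' + I\<^sub>2 q' q'' + ereal \<eta>"
        by (cases "I\<^sub>1 q q'") (auto simp: algebra_simps)
    qed
  qed (use weak_LDP_nonneg[OF W1, of q q'] weak_LDP_nonneg[OF W2, of q' q''] in auto)
qed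

theorem proposition2p1:
  fixes E :: "'a::euclidean_space set" and \<Omega> :: "'w measure"
    and P :: "'a \<Rightarrow> 'w measure" and Z :: "real \<Rightarrow> 'w \<Rightarrow> 'a"
    and T\<^sub>0 :: real and I\<^sub>0 :: "'a \<Rightarrow> 'a \<Rightarrow> ereal"
  assumes "markov_process E \<Omega> P Z"
    and "\<not> bounded E"
    and "T\<^sub>0 > 0"
    and "weak_LDP E \<Omega> P Z T\<^sub>0 I\<^sub>0"
  shows "\<exists>I :: real \<Rightarrow> 'a \<Rightarrow> 'a \<Rightarrow> ereal.
           (\<forall>T>0. weak_LDP E \<Omega> P Z T (I T)) \<and>
           (\<forall>\<theta>>0. \<forall>T>0. \<forall>q q'. I (\<theta> * T) (\<theta> *\<^sub>R q) (\<theta> *\<^sub>R q') = ereal \<theta> * I T q q') \<and>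
           (\<forall>T>0. \<forall>T'>0. \<forall>q q' q''. I (T + T') q q'' \<le> I T q q' + I T' q' q'')"
proof -
  define J where "J q q' = (if scaling_avoids E q then \<infinity> else I\<^sub>0 q q')" for q q'
  define I where "I = (\<lambda>T q q'. ereal (T / T\<^sub>0) * J ((T\<^sub>0 / T) *\<^sub>R q) ((T\<^sub>0 / T) *\<^sub>R q'))"
  have "weak_LDP E \<Omega> P Z T\<^sub>0 J"
    unfolding J_def by (rule weak_LDP_infinite_where_avoided[OF assms(4)])
  then have LDP: "weak_LDP E \<Omega> P Z T (I T)" if "T > 0" for T
    using weak_LDP_time_scale[of E \<Omega> P Z T\<^sub>0 J "T / T\<^sub>0"] that \<open>T\<^sub>0 > 0\<close> by (simp add: I_def)
  have scale: "I (\<theta> * T) (\<theta> *\<^sub>R q) (\<theta> *\<^sub>R q') = ereal \<theta> * I T q q'" if "\<theta> > 0" for \<theta> T q q'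
    using that by (simp add: I_def mult.assoc[symmetric])
  have subadditive: "I (T + T') q q'' \<le> I T q q' + I T' q' q''" if "T > 0" "T' > 0" for T T' q q' q''
  proof (cases "scaling_avoids E q")
    case True
    with that(1) \<open>T\<^sub>0 > 0\<close> have "I T q q' = \<infinity>"
      by (simp add: I_def J_def scaling_avoids_scaleR)
    then show ?thesis
      by simp
  next
    case False
    with that show ?thesis
      by (intro weak_LDP_subadditive[OF assms(1) _ _ LDP LDP LDP]) auto
  qed
  show ?thesis
    using LDP scale subadditive by blast
qed

end
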